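(* Let $m\ge 1$ and let $\Sigma=\begin{pmatrix}2I_{m+1} & I_{m+1}\\ I_{m+1} & 2I_{m+1}\end{pmatrix}\in\mathbb{R}^{(2m+2)\times(2m+2)}$, where $I_{m+1}$ is the $(m+1)\times(m+1)$ identity matrix. Then every $(2m+1)\times(2m+1)$ principal submatrix of $\Sigma$ belongs to $F_{2m+1,m}$, but $\Sigma\notin F_{2m+2,m}$.
   Context: For integers $p\ge 1$, $m\ge 1$, $F_{p,m}=\{\Delta+\Gamma\Gamma^t : \Delta \text{ a positive definite diagonal } p\times p \text{ matrix},\ \Gamma\in\mathbb{R}^{p\times m}\}$. *)

theory Defs
  imports "Jordan_Normal_Form.Matrix" "Jordan_Normal_Form.DL_Submatrix"
begin

definition F_set :: "nat \<Rightarrow> nat \<Rightarrow> real mat set" where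
  "F_set p m = {\<Delta> + \<Gamma> * \<Gamma>\<^sup>T | \<Delta> \<Gamma>.
      \<Delta> \<in> carrier_mat p p \<and> diagonal_mat \<Delta> \<and> (\<forall>i<p. \<Delta> $$ (i,i) > 0) \<and>
      \<Gamma> \<in> carrier_mat p m}"

definition Sigma_mat :: "nat \<Rightarrow> real mat" where
  "Sigma_mat m = four_block_mat (2 \<cdot>\<^sub>m 1\<^sub>m (m+1)) (1\<^sub>m (m+1)) (1\<^sub>m (m+1)) (2 \<cdot>\<^sub>m 1\<^sub>m (m+1))"

end

theory Submission
  imports Defs "Jordan_Normal_Form.Determinant"
begin

(* The matrix Sigma = [[2I, I], [I, 2I]] (blocks of size m+1) satisfies
     Sigma_ab = [a = b] + [a = b mod (m+1)],
   i.e. Sigma = I + E E^T where column j of the 2(m+1) x (m+1) matrix E indicates the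
   residue class {j, j+m+1}.

   Principal minors of size 2m+1: if the index r is deleted, its residue class c keeps only
   one index, so the rank-one term of column c of E becomes diagonal on the remaining indices.
   Hence on the remaining indices Sigma agrees with Delta_c + Gamma_c Gamma_c^T, where Gamma_c
   consists of the m other columns of E; and F_{p,m} is closed under principal submatrices.

   Sigma itself: its upper right block is the identity of size m+1, but the same block of
   Delta + Gamma Gamma^T is Gamma_1 Gamma_2^T with m columns, which is singular. *)

lemma pick_index_bound:
  assumes "i < card {a. a < N \<and> a \<in> I}"
  shows "i < card I \<or> infinite I"
  using assms card_mono[of I "{a. a < N \<and> a \<in> I}"] by fastforce

lemma pick_bounded:
  assumes "i < card {a. a < N \<and> a \<in> I}"
  shows "pick I i \<in> I" "pick I i < N"
  using pick_in_set[OF pick_index_bound[OF assms]] pick_le[OF assms] by auto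

lemma pick_inj:
  assumes "i < card {a. a < N \<and> a \<in> I}" "j < card {a. a < N \<and> a \<in> I}" "pick I i = pick I j"
  shows "i = j"
  using pick_mono[OF pick_index_bound[OF assms(1)], of j]
    pick_mono[OF pick_index_bound[OF assms(2)], of i] assms(3)
  by (metis less_irrefl nat_neq_iff)

lemma submatrix_add:
  assumes "A \<in> carrier_mat n k" "B \<in> carrier_mat n k"
  shows "submatrix (A + B) I J = submatrix A I J + submatrix B I J"
proof (rule eq_matI)
  fix i j assume "i < dim_row (submatrix A I J + submatrix B I J)"
    "j < dim_col (submatrix A I J + submatrix B I J)"
  then show "submatrix (A + B) I J $$ (i, j) = (submatrix A I J + submatrix B I J) $$ (i, j)"
    using assms pick_le by (auto simp: submatrix_def)
qed (use assms in \<open>auto simp: dim_submatrix\<close>)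

lemma submatrix_mult:
  assumes "dim_col A = dim_row B"
  shows "submatrix (A * B) I J = submatrix A I UNIV * submatrix B UNIV J"
proof (rule eq_matI)
  fix i j assume ij: "i < dim_row (submatrix A I UNIV * submatrix B UNIV J)"
    "j < dim_col (submatrix A I UNIV * submatrix B UNIV J)"
  then have "pick I i < dim_row A" "pick J j < dim_col B"
    using pick_le by (auto simp: dim_submatrix)
  then show "submatrix (A * B) I J $$ (i, j) = (submatrix A I UNIV * submatrix B UNIV J) $$ (i, j)"
    using ij assms by (auto simp: submatrix_def scalar_prod_def pick_UNIV)
qed (use assms in \<open>auto simp: dim_submatrix\<close>)

lemma submatrix_transpose: "submatrix A\<^sup>T I J = (submatrix A J I)\<^sup>T"
  by (rule eq_matI) (auto simp: submatrix_def pick_le)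

lemma submatrix_cong:
  assumes "dim_row A = dim_row B" "dim_col A = dim_col B"
    and "\<And>a b. a \<in> I \<Longrightarrow> b \<in> J \<Longrightarrow> a < dim_row A \<Longrightarrow> b < dim_col A \<Longrightarrow> A $$ (a,b) = B $$ (a,b)"
  shows "submatrix A I J = submatrix B I J"
proof (rule eq_matI)
  fix i j assume "i < dim_row (submatrix B I J)" "j < dim_col (submatrix B I J)"
  then have i: "i < card {a. a < dim_row A \<and> a \<in> I}" and j: "j < card {b. b < dim_col A \<and> b \<in> J}"
    using assms(1,2) by (simp_all add: dim_submatrix)
  then show "submatrix A I J $$ (i, j) = submatrix B I J $$ (i, j)"
    using assms pick_bounded[OF i] pick_bounded[OF j] by (simp add: submatrix_index)
qed (use assms in \<open>auto simp: dim_submatrix\<close>)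

lemma diagonal_submatrix:
  assumes "D \<in> carrier_mat n n" "diagonal_mat D"
  shows "diagonal_mat (submatrix D I I)"
  unfolding diagonal_mat_def
proof (intro allI impI)
  fix i j assume ij: "i < dim_row (submatrix D I I)" "j < dim_col (submatrix D I I)" "i \<noteq> j"
  then have ij': "i < card {a. a < dim_row D \<and> a \<in> I}" "j < card {a. a < dim_row D \<and> a \<in> I}"
    using assms(1) by (auto simp: dim_submatrix)
  have "pick I i \<noteq> pick I j"
    using pick_inj[OF ij'] ij(3) by blast
  then show "submatrix D I I $$ (i, j) = 0"
    using ij assms pick_le by (auto simp: submatrix_def diagonal_mat_def)
qed

lemma F_set_carrier: "A \<in> F_set n k \<Longrightarrow> A \<in> carrier_mat n n"
  unfolding F_set_def by auto

lemma F_set_principal_submatrix: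
  assumes "A \<in> F_set n k" "I \<subseteq> {0..<n}"
  shows "submatrix A I I \<in> F_set (card I) k"
proof -
  obtain D G where A: "A = D + G * G\<^sup>T" and D: "D \<in> carrier_mat n n" "diagonal_mat D"
      "\<forall>i<n. D $$ (i,i) > 0" and G: "G \<in> carrier_mat n k"
    using assms(1) unfolding F_set_def by blast
  define D' where "D' = submatrix D I I"
  define G' where "G' = submatrix G I UNIV"
  have rows: "{i. i < n \<and> i \<in> I} = I" using assms(2) by auto
  have "submatrix A I I = D' + G' * G'\<^sup>T"
    using D G unfolding A D'_def G'_def
    by (simp add: submatrix_add[of _ n n] submatrix_mult submatrix_transpose)
  moreover have "D' \<in> carrier_mat (card I) (card I)" "G' \<in> carrier_mat (card I) k"
    using D G rows by (auto simp: D'_def G'_def dim_submatrix)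
  moreover have "diagonal_mat D'"
    unfolding D'_def using diagonal_submatrix D(1,2) .
  moreover have "D' $$ (i,i) > 0" if "i < card I" for i
  proof -
    have "i < card {i. i < n \<and> i \<in> I}" using that rows by simp
    then show ?thesis
      using D by (auto simp: D'_def submatrix_index pick_le)
  qed
  ultimately show ?thesis unfolding F_set_def by blast
qed

(* A product of an n x k and a k x n matrix with k < n has rank at most k, so it is not the
   identity: pad both factors by zero columns and compare determinants. *)
lemma thin_product_neq_one:
  fixes A B :: "'a :: field mat"
  assumes A: "A \<in> carrier_mat n k" and B: "B \<in> carrier_mat n k" and "k < n"
  shows "A * B\<^sup>T \<noteq> 1\<^sub>m n"
proof
  assume AB: "A * B\<^sup>T = 1\<^sub>m n"
  define pad :: "'a mat \<Rightarrow> 'a mat" where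
    "pad M = mat n n (\<lambda>(i,j). if j < k then M $$ (i,j) else 0)" for M
  have pad_carrier: "pad M \<in> carrier_mat n n" for M by (simp add: pad_def)
  have "pad A * (pad B)\<^sup>T = A * B\<^sup>T"
  proof (rule eq_matI)
    fix i j assume ij: "i < dim_row (A * B\<^sup>T)" "j < dim_col (A * B\<^sup>T)"
    have "(pad A * (pad B)\<^sup>T) $$ (i,j) =
        (\<Sum>l\<in>{0..<n}. (if l < k then A $$ (i,l) else 0) * (if l < k then B $$ (j,l) else 0))"
      using ij A B by (simp add: pad_def scalar_prod_def)
    also have "\<dots> = (\<Sum>l\<in>{0..<k}. A $$ (i,l) * B $$ (j,l))"
      using \<open>k < n\<close> by (intro sum.mono_neutral_cong_right) auto
    also have "\<dots> = (A * B\<^sup>T) $$ (i,j)"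
      using ij A B by (simp add: scalar_prod_def)
    finally show "(pad A * (pad B)\<^sup>T) $$ (i,j) = (A * B\<^sup>T) $$ (i,j)" .
  qed (use A B in \<open>simp_all add: pad_def\<close>)
  moreover have "det (pad A) = 0"
  proof -
    have "pad A *\<^sub>v unit_vec n k = 0\<^sub>v n"
      by (intro eq_vecI) (auto simp: pad_def scalar_prod_def unit_vec_def intro!: sum.neutral)
    moreover have "unit_vec n k \<noteq> (0\<^sub>v n :: 'a vec)"
      using \<open>k < n\<close> by (metis index_unit_vec(1) index_zero_vec(1) zero_neq_one)
    ultimately show ?thesis
      using det_0_iff_vec_prod_zero_field[OF pad_carrier] unit_vec_carrier by metis
  qed
  moreover have "det (pad A * (pad B)\<^sup>T) = det (pad A) * det ((pad B)\<^sup>T)"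
    using pad_carrier by (intro det_mult) auto
  ultimately show False using AB by simp
qed

lemma residue_class_at_most_two:
  fixes x y z n :: nat
  assumes "x < 2*n" "y < 2*n" "z < 2*n" and "x mod n = z mod n" "y mod n = z mod n"
    and "x \<noteq> z" "y \<noteq> z"
  shows "x = y"
proof -
  have quot: "x div n < 2" "y div n < 2" "z div n < 2"
    using assms(1-3) by (simp_all add: div_less_iff_less_mult mult.commute)
  have same_class: "u = v" if "u div n = v div n" "u mod n = v mod n" for u v :: nat
    by (metis that div_mult_mod_eq)
  have "x div n \<noteq> z div n" "y div n \<noteq> z div n"
    using same_class[of x z] same_class[of y z] assms(4-7) by auto
  then have "x div n = y div n" using quot by linarith
  then show ?thesis using same_class[of x y] assms(4,5) by simp
qed

lemma Sigma_mat_carrier: "Sigma_mat m \<in> carrier_mat (2*m+2) (2*m+2)"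
  by (rule carrier_matI) (simp_all add: Sigma_mat_def)

lemma Sigma_mat_index:
  assumes "a < 2*m+2" "b < 2*m+2"
  shows "Sigma_mat m $$ (a,b) =
    (if a = b then 1 else 0) + (if a mod Suc m = b mod Suc m then 1 else 0)"
  using assms by (auto simp: Sigma_mat_def mod_if)

(* The upper right (m+1) x (m+1) block of Sigma is the identity, while the same block of
   Delta + Gamma Gamma^T is a product through dimension m. *)
lemma Sigma_not_in_F_set: "Sigma_mat m \<notin> F_set (2*m+2) m"
proof
  assume "Sigma_mat m \<in> F_set (2*m+2) m"
  then obtain D G where Sigma: "Sigma_mat m = D + G * G\<^sup>T"
    and D: "D \<in> carrier_mat (2*m+2) (2*m+2)" "diagonal_mat D" and G: "G \<in> carrier_mat (2*m+2) m"
    unfolding F_set_def by blast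
  define A where "A = mat (Suc m) m (\<lambda>(i,l). G $$ (i,l))"
  define B where "B = mat (Suc m) m (\<lambda>(j,l). G $$ (Suc m + j, l))"
  have "A * B\<^sup>T = 1\<^sub>m (Suc m)"
  proof (rule eq_matI)
    fix i j assume "i < dim_row (1\<^sub>m (Suc m))" "j < dim_col (1\<^sub>m (Suc m))"
    then have ij: "i < Suc m" "j < Suc m" by simp_all
    have "(A * B\<^sup>T) $$ (i,j) = (G * G\<^sup>T) $$ (i, Suc m + j)"
      using ij G by (simp add: A_def B_def scalar_prod_def)
    also have "\<dots> = Sigma_mat m $$ (i, Suc m + j) - D $$ (i, Suc m + j)"
      using ij D G by (simp add: Sigma)
    also have "\<dots> = (if i = j then 1 else 0)"
    proof -
      have "(Suc m + j) mod Suc m = j" using ij(2) by (simp only: mod_add_self1 mod_less)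
      then show ?thesis using ij D by (simp add: Sigma_mat_index diagonal_mat_def)
    qed
    finally show "(A * B\<^sup>T) $$ (i,j) = 1\<^sub>m (Suc m) $$ (i,j)" using ij by simp
  qed (simp_all add: A_def B_def)
  moreover have "A \<in> carrier_mat (Suc m) m" "B \<in> carrier_mat (Suc m) m"
    by (simp_all add: A_def B_def)
  ultimately show False using thin_product_neq_one by blast
qed

definition skip :: "nat \<Rightarrow> nat \<Rightarrow> nat" where
  "skip c k = (if k < c then k else Suc k)"

lemma skip_bij: "c \<le> m \<Longrightarrow> bij_betw (skip c) {..<m} ({..m} - {c})"
  unfolding skip_def
  by (rule bij_betw_byWitness[where f' = "\<lambda>j. if j < c then j else j - 1"]) auto

(* The candidate decomposition when an index of residue class c is deleted: the columns of E
   other than c go into Gamma, and the rank-one term of column c goes into the diagonal. *)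
definition Delta_split :: "nat \<Rightarrow> nat \<Rightarrow> real mat" where
  "Delta_split m c = mat (2*m+2) (2*m+2)
     (\<lambda>(a,b). if a = b then (if a mod Suc m = c then 2 else 1) else 0)"

definition Gamma_split :: "nat \<Rightarrow> nat \<Rightarrow> real mat" where
  "Gamma_split m c = mat (2*m+2) m (\<lambda>(a,k). if a mod Suc m = skip c k then 1 else 0)"

lemma Gamma_split_gram:
  assumes "c \<le> m" "a < 2*m+2" "b < 2*m+2"
  shows "(Gamma_split m c * (Gamma_split m c)\<^sup>T) $$ (a,b) =
    (if a mod Suc m = b mod Suc m \<and> a mod Suc m \<noteq> c then 1 else 0)"
proof -
  define x y where "x = a mod Suc m" and "y = b mod Suc m"
  define hit :: "nat \<Rightarrow> real" where "hit j = (if x = j \<and> y = j then 1 else 0)" for j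
  have "(Gamma_split m c * (Gamma_split m c)\<^sup>T) $$ (a,b) = (\<Sum>k<m. hit (skip c k))"
    using assms by (auto simp: Gamma_split_def scalar_prod_def lessThan_atLeast0 hit_def x_def y_def
        intro!: sum.cong)
  also have "\<dots> = (\<Sum>j \<in> {..m} - {c}. hit j)"
    using sum.reindex_bij_betw[OF skip_bij[OF assms(1)]] by blast
  also have "\<dots> = (\<Sum>j \<in> {..m} - {c}. if x = j then (if x = y then 1 else 0) else 0)"
    unfolding hit_def by (intro sum.cong) auto
  also have "\<dots> = (if x = y \<and> x \<noteq> c then 1 else 0)"
    using mod_less_divisor[of "Suc m" a] by (simp add: x_def flip: less_Suc_eq_le)
  finally show ?thesis by (simp add: x_def y_def)
qed

lemma split_in_F_set:
  "Delta_split m c + Gamma_split m c * (Gamma_split m c)\<^sup>T \<in> F_set (2*m+2) m"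
  unfolding F_set_def
  by (intro CollectI exI[of _ "Delta_split m c"] exI[of _ "Gamma_split m c"])
    (auto simp: Delta_split_def Gamma_split_def diagonal_mat_def)

(* Once r is deleted, the class of r has a single member left, so Sigma and the split
   matrix agree on all remaining entries. *)
lemma Sigma_agrees_with_split:
  assumes r: "r < 2*m+2" and ab: "a < 2*m+2" "b < 2*m+2" "a \<noteq> r" "b \<noteq> r"
  defines "c \<equiv> r mod Suc m"
  shows "Sigma_mat m $$ (a,b) =
    (Delta_split m c + Gamma_split m c * (Gamma_split m c)\<^sup>T) $$ (a,b)"
proof -
  have c: "c \<le> m" unfolding c_def using mod_less_divisor[of "Suc m" r] by linarith
  have partner: "a = b" if "a mod Suc m = c" "b mod Suc m = c"
    using residue_class_at_most_two[of a "Suc m" b r] r ab that unfolding c_def by simp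
  have "(Delta_split m c + Gamma_split m c * (Gamma_split m c)\<^sup>T) $$ (a,b) =
      Delta_split m c $$ (a,b) + (Gamma_split m c * (Gamma_split m c)\<^sup>T) $$ (a,b)"
    using ab by (intro index_add_mat(1)) (simp_all add: Gamma_split_def)
  also have "\<dots> = (if a = b then (if a mod Suc m = c then 2 else 1) else 0)
      + (if a mod Suc m = b mod Suc m \<and> a mod Suc m \<noteq> c then 1 else 0)"
    using ab by (simp add: Delta_split_def Gamma_split_gram[OF c])
  also have "\<dots> = Sigma_mat m $$ (a,b)"
    using partner ab by (auto simp: Sigma_mat_index)
  finally show ?thesis by simp
qed

lemma Sigma_principal_submatrix_in_F_set:
  assumes I: "I \<subseteq> {0..<2*m+2}" "card I = 2*m+1"
  shows "submatrix (Sigma_mat m) I I \<in> F_set (2*m+1) m"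
proof -
  have "\<not> {0..<2*m+2} \<subseteq> I"
  proof
    assume "{0..<2*m+2} \<subseteq> I"
    then have "card {0..<2*m+2} \<le> card I"
      using finite_subset[OF I(1)] by (intro card_mono) auto
    then show False using I(2) by simp
  qed
  then obtain r where r: "r < 2*m+2" "r \<notin> I"
    by (meson atLeastLessThan_iff subsetI zero_le)
  define c where "c = r mod Suc m"
  define S where "S = Delta_split m c + Gamma_split m c * (Gamma_split m c)\<^sup>T"
  have S: "S \<in> F_set (2*m+2) m" unfolding S_def by (rule split_in_F_set)
  have "submatrix (Sigma_mat m) I I = submatrix S I I"
    using Sigma_mat_carrier[of m] F_set_carrier[OF S] r
    by (intro submatrix_cong) (auto simp: S_def c_def intro!: Sigma_agrees_with_split)
  then show ?thesis
    using F_set_principal_submatrix[OF S I(1)] I(2) by simp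
qed

(* Both halves hold for every m. *)
theorem mainTheorem8:
  fixes m :: nat
  assumes "m \<ge> 1"
  shows "(\<forall>I. I \<subseteq> {0..<2*m+2} \<and> card I = 2*m+1 \<longrightarrow>
            submatrix (Sigma_mat m) I I \<in> F_set (2*m+1) m)
         \<and> Sigma_mat m \<notin> F_set (2*m+2) m"
  using Sigma_principal_submatrix_in_F_set Sigma_not_in_F_set by blast

end
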